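(* Let $\rho=\frac12(I+x\sigma_1+y\sigma_2+z\sigma_3)$ with $(x,y,z)\in\mathbb R^3$ and $r:=\sqrt{x^2+y^2+z^2}\in[0,1)$, let $A\in M_2(\mathbb C)$ be self-adjoint and $f\in\mathcal F^{\,r}_{op}$. Let $\varphi_1,\varphi_2$ be an orthonormal basis of eigenvectors of $\rho$ with $\rho\varphi_1=\frac{1-r}{2}\varphi_1$, $\rho\varphi_2=\frac{1+r}{2}\varphi_2$, let $A_0=A-\mathrm{Tr}(\rho A)I$ and $a_{12}=\langle A_0\varphi_1,\varphi_2\rangle$. Then $$I^f_\rho(A)=\big[1-m_{\tilde f}(1-r,1+r)\big]\,|a_{12}|^2.$$
   Context: $\sigma_1=\begin{pmatrix}0&1\\1&0\end{pmatrix}$, $\sigma_2=\begin{pmatrix}0&-i\\i&0\end{pmatrix}$, $\sigma_3=\begin{pmatrix}1&0\\0&-1\end{pmatrix}$ are the Pauli matrices. $\mathcal F_{op}$ is the class of functions $f:(0,\infty)\to(0,\infty)$ that are operator monotone, satisfy $f(1)=1$ and $tf(t^{-1})=f(t)$ for all $t>0$. $f(0):=\lim_{x\to0^+}f(x)$, and $\mathcal F^{\,r}_{op}=\{f\in\mathcal F_{op}: f(0)\neq0\}$. For $f\in\mathcal F^{\,r}_{op}$, $\tilde f(x):=\frac12\big[(x+1)-(x-1)^2\frac{f(0)}{f(x)}\big]$ for $x>0$. For $g\in\mathcal F_{op}$ and $x,y>0$, $m_g(x,y)=xg(y/x)$. $L_\rho(X)=\rho X$, $R_\rho(X)=X\rho$,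 and $m_f(L_\rho,R_\rho)$ multiplies the entry $X_{ij}$ of $X$ (in an orthonormal eigenbasis of $\rho$ with eigenvalues $\lambda_i$) by $m_f(\lambda_i,\lambda_j)$. $\|X\|^2_{\rho,f}=\mathrm{Tr}\big(X^* m_f(L_\rho,R_\rho)^{-1}(X)\big)$. The $f$-information is $I^f_\rho(A)=\frac{f(0)}{2}\|i[\rho,A]\|^2_{\rho,f}$. *)

theory Defs
  imports "HOL-Analysis.Analysis" "Jordan_Normal_Form.Matrix"
begin

definition adj :: "complex mat \<Rightarrow> complex mat" where
  "adj A = mat (dim_col A) (dim_row A) (\<lambda>(i,j). cnj (A $$ (j,i)))"

definition mtrace :: "complex mat \<Rightarrow> complex" where
  "mtrace A = (\<Sum>i<dim_row A. A $$ (i,i))"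

definition hermitian_mat :: "complex mat \<Rightarrow> bool" where
  "hermitian_mat A \<longleftrightarrow> A \<in> carrier_mat (dim_row A) (dim_row A) \<and> adj A = A"

definition psd_mat :: "complex mat \<Rightarrow> bool" where
  "psd_mat A \<longleftrightarrow> A \<in> carrier_mat (dim_row A) (dim_row A) \<and>
     (\<forall>v \<in> carrier_vec (dim_row A). Im ((A *\<^sub>v v) \<bullet>c v) = 0 \<and> Re ((A *\<^sub>v v) \<bullet>c v) \<ge> 0)"

definition unitary_mat :: "nat \<Rightarrow> complex mat \<Rightarrow> bool" where
  "unitary_mat n U \<longleftrightarrow> U \<in> carrier_mat n n \<and> adj U * U = 1\<^sub>m n"

definition diag_c :: "nat \<Rightarrow> (nat \<Rightarrow> real) \<Rightarrow> complex mat" where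
  "diag_c n d = mat n n (\<lambda>(i,j). if i = j then complex_of_real (d i) else 0)"

definition comm :: "complex mat \<Rightarrow> complex mat \<Rightarrow> complex mat" where
  "comm A B = A * B - B * A"

definition sigma1 :: "complex mat" where
  "sigma1 = mat_of_rows_list 2 [[0, 1], [1, 0]]"
definition sigma2 :: "complex mat" where
  "sigma2 = mat_of_rows_list 2 [[0, -\<i>], [\<i>, 0]]"
definition sigma3 :: "complex mat" where
  "sigma3 = mat_of_rows_list 2 [[1, 0], [0, -1]]"

definition bloch_state :: "real \<Rightarrow> real \<Rightarrow> real \<Rightarrow> complex mat" where
  "bloch_state x y z = (1/2 :: complex) \<cdot>\<^sub>m
     (1\<^sub>m 2 + complex_of_real x \<cdot>\<^sub>m sigma1 + complex_of_real y \<cdot>\<^sub>m sigma2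
          + complex_of_real z \<cdot>\<^sub>m sigma3)"

text \<open>f is operator monotone on (0,\<infinity>): for all n and all positive definite n\<times>n matrices
  A = U diag(a) U*, B = V diag(b) V* with A \<le> B we have f(A) \<le> f(B), where
  f(A) = U diag(f a) U* is the functional calculus.\<close>
definition operator_monotone :: "(real \<Rightarrow> real) \<Rightarrow> bool" where
  "operator_monotone f \<longleftrightarrow>
    (\<forall>n U V a b. unitary_mat n U \<and> unitary_mat n V \<and> (\<forall>i<n. a i > 0 \<and> b i > 0) \<and>
       psd_mat (V * diag_c n b * adj V - U * diag_c n a * adj U) \<longrightarrow>
       psd_mat (V * diag_c n (f \<circ> b) * adj V - U * diag_c n (f \<circ> a) * adj U))"

definition F_op :: "(real \<Rightarrow> real) \<Rightarrow> bool" where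
  "F_op f \<longleftrightarrow> (\<forall>x>0. f x > 0) \<and> operator_monotone f \<and> f 1 = 1 \<and>
              (\<forall>t>0. t * f (1 / t) = f t)"

definition fzero :: "(real \<Rightarrow> real) \<Rightarrow> real" where
  "fzero f = Lim (at_right 0) f"

definition F_op_r :: "(real \<Rightarrow> real) \<Rightarrow> bool" where
  "F_op_r f \<longleftrightarrow> F_op f \<and> fzero f \<noteq> 0"

definition ftilde :: "(real \<Rightarrow> real) \<Rightarrow> real \<Rightarrow> real" where
  "ftilde f x = ((x + 1) - (x - 1)^2 * fzero f / f x) / 2"

definition mean_of :: "(real \<Rightarrow> real) \<Rightarrow> real \<Rightarrow> real \<Rightarrow> real" where
  "mean_of g x y = x * g (y / x)"

text \<open>\<open>m_f(L_\<rho>,R_\<rho>)^{-1}(X)\<close> computed in an orthonormal eigenbasis of \<rho> (columns of U,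
  eigenvalues lam), and \<open>\<parallel>X\<parallel>^2_{\<rho>,f} = Tr(X^* m_f(L_\<rho>,R_\<rho>)^{-1}(X))\<close>.\<close>
definition mf_inv_in_basis ::
  "(real \<Rightarrow> real) \<Rightarrow> nat \<Rightarrow> complex mat \<Rightarrow> (nat \<Rightarrow> real) \<Rightarrow> complex mat \<Rightarrow> complex mat" where
  "mf_inv_in_basis f n U lam X =
     U * mat n n (\<lambda>(i,j). (adj U * X * U) $$ (i,j) / complex_of_real (mean_of f (lam i) (lam j)))
       * adj U"

definition fnorm2 :: "(real \<Rightarrow> real) \<Rightarrow> complex mat \<Rightarrow> complex mat \<Rightarrow> complex" where
  "fnorm2 f \<rho> X =
     (let n = dim_row \<rho>;
          (U, lam) = (SOME (U, lam). unitary_mat n U \<and> \<rho> = U * diag_c n lam * adj U)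
      in mtrace (adj X * mf_inv_in_basis f n U lam X))"

definition finfo :: "(real \<Rightarrow> real) \<Rightarrow> complex mat \<Rightarrow> complex mat \<Rightarrow> complex" where
  "finfo f \<rho> A = complex_of_real (fzero f / 2) * fnorm2 f \<rho> (\<i> \<cdot>\<^sub>m comm \<rho> A)"

end

theory Submission
  imports Defs "Jordan_Normal_Form.Determinant"
begin

(* In any orthonormal eigenbasis of rho, with eigenvalues l_1, l_2, the commutator X = i[rho,A]
   has entries i (l_j - l_k) b_jk, where b_jk are the entries of A in that basis. So the diagonal
   of X vanishes and, m_f being symmetric, the f-norm of X is Tr(X^* X) / m_f(l_1, l_2), whichever
   eigenbasis the definition happens to choose. In the basis phi_1, phi_2 the Hilbert-Schmidt norm
   is Tr(X^* X) = 2 r^2 |a_12|^2, and the identity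
     m_~f(a, b) = ((a + b) - (b - a)^2 f(0) / m_f(a, b)) / 2
   turns f(0) r^2 / m_f((1 - r)/2, (1 + r)/2) into 1 - m_~f(1 - r, 1 + r). *)

lemma adj_carrier_mat [simp]: "A \<in> carrier_mat n m \<Longrightarrow> adj A \<in> carrier_mat m n"
  by (simp add: adj_def)

lemma adj_dim [simp]: "dim_row (adj A) = dim_col A" "dim_col (adj A) = dim_row A"
  by (simp_all add: adj_def)

lemma adj_index [simp]: "i < dim_col A \<Longrightarrow> j < dim_row A \<Longrightarrow> adj A $$ (i,j) = cnj (A $$ (j,i))"
  by (simp add: adj_def)

lemma adj_adj [simp]: "adj (adj A) = A"
  by (rule eq_matI) auto

lemma adj_mult:
  assumes "A \<in> carrier_mat n m" "B \<in> carrier_mat m k"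
  shows "adj (A * B) = adj B * adj A"
  by (rule eq_matI) (use assms in \<open>auto simp: scalar_prod_def cnj_sum mult.commute\<close>)

lemma mult_carrier_mat_square [simp]:
  "A \<in> carrier_mat n n \<Longrightarrow> B \<in> carrier_mat n n \<Longrightarrow> A * B \<in> carrier_mat n n"
  by (rule mult_carrier_mat)

lemma assoc_mult_mat_dims:
  "dim_col A = dim_row B \<Longrightarrow> dim_col B = dim_row C \<Longrightarrow> A * B * C = A * (B * C)"
  by (rule assoc_mult_mat[of A "dim_row A" "dim_col A" B "dim_col B" C "dim_col C"]) auto

lemma diag_c_carrier [simp]: "diag_c n l \<in> carrier_mat n n"
  by (simp add: diag_c_def)

lemma diag_c_dim [simp]: "dim_row (diag_c n l) = n" "dim_col (diag_c n l) = n"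
  by (simp_all add: diag_c_def)

lemma diag_c_index:
  "i < n \<Longrightarrow> j < n \<Longrightarrow> diag_c n l $$ (i,j) = (if i = j then complex_of_real (l i) else 0)"
  by (simp add: diag_c_def)

lemma diag_c_mult_index:
  assumes "B \<in> carrier_mat n n" "i < n" "j < n"
  shows "(diag_c n l * B) $$ (i,j) = complex_of_real (l i) * B $$ (i,j)"
    and "(B * diag_c n l) $$ (i,j) = B $$ (i,j) * complex_of_real (l j)"
  using assms
  by (auto simp: scalar_prod_def diag_c_index if_distrib if_distribR sum.delta sum.delta'
      cong: if_cong)

lemma mtrace_mult_comm:
  assumes A: "A \<in> carrier_mat n m" and B: "B \<in> carrier_mat m n"
  shows "mtrace (A * B) = mtrace (B * A)"
proof -
  have "mtrace (A * B) = (\<Sum>i<n. \<Sum>k<m. A $$ (i,k) * B $$ (k,i))"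
    using assms by (simp add: mtrace_def scalar_prod_def atLeast0LessThan)
  also have "\<dots> = (\<Sum>k<m. \<Sum>i<n. B $$ (k,i) * A $$ (i,k))"
    by (subst sum.swap) (simp add: mult.commute)
  also have "\<dots> = mtrace (B * A)"
    using assms by (simp add: mtrace_def scalar_prod_def atLeast0LessThan)
  finally show ?thesis .
qed

lemma unitary_mat_right_inverse:
  assumes "unitary_mat n U" shows "U * adj U = 1\<^sub>m n"
  using assms mat_mult_left_right_inverse[of "adj U" n U] by (simp add: unitary_mat_def)

lemma unitary_mat_adj:
  assumes "unitary_mat n U" shows "unitary_mat n (adj U)"
  using assms unitary_mat_right_inverse[OF assms] by (simp add: unitary_mat_def)

lemma mtrace_unitary_conj:
  assumes U: "unitary_mat n U" and M: "M \<in> carrier_mat n n"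
  shows "mtrace (adj U * M * U) = mtrace M"
proof -
  have Uc: "U \<in> carrier_mat n n" using U by (simp add: unitary_mat_def)
  have "mtrace (adj U * M * U) = mtrace (U * (adj U * M))"
    by (rule mtrace_mult_comm) (use M Uc in auto)
  also have "\<dots> = mtrace (U * adj U * M)"
    using M Uc by (simp add: assoc_mult_mat[of U n n "adj U" n M n])
  finally show ?thesis
    using M by (simp add: unitary_mat_right_inverse[OF U])
qed

lemma mtrace_unitary_diag:
  assumes "unitary_mat n U"
  shows "mtrace (U * diag_c n l * adj U) = (\<Sum>i<n. complex_of_real (l i))"
  using mtrace_unitary_conj[OF unitary_mat_adj[OF assms], of "diag_c n l"]
  by (simp add: mtrace_def diag_c_index)

lemma unitary_diag_square:
  assumes U: "unitary_mat n U"
  shows "(U * diag_c n l * adj U) * (U * diag_c n l * adj U) =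
           U * diag_c n (\<lambda>i. (l i)\<^sup>2) * adj U"
proof -
  have Uc: "U \<in> carrier_mat n n" and UU: "adj U * U = 1\<^sub>m n"
    using U by (simp_all add: unitary_mat_def)
  have sq: "diag_c n l * diag_c n l = diag_c n (\<lambda>i. (l i)\<^sup>2)"
    by (rule eq_matI)
      (auto simp: diag_c_mult_index(1)[OF diag_c_carrier] diag_c_index power2_eq_square
        simp del: index_mult_mat(1))
  have "(U * diag_c n l * adj U) * (U * diag_c n l * adj U) =
      U * diag_c n l * ((adj U * U) * (diag_c n l * adj U))"
    using Uc by (simp add: assoc_mult_mat_dims)
  also have "\<dots> = U * diag_c n (\<lambda>i. (l i)\<^sup>2) * adj U"
    using Uc by (simp add: UU assoc_mult_mat_dims flip: sq)
  finally show ?thesis .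
qed

lemma commutator_in_eigenbasis:
  assumes U: "unitary_mat n U" and \<rho>: "\<rho> = U * diag_c n l * adj U" and A: "A \<in> carrier_mat n n"
    and ij: "i < n" "j < n"
  shows "(adj U * (c \<cdot>\<^sub>m comm \<rho> A) * U) $$ (i,j) =
           c * complex_of_real (l i - l j) * (adj U * A * U) $$ (i,j)"
proof -
  define D where "D = diag_c n l"
  define B where "B = adj U * A * U"
  have Uc: "U \<in> carrier_mat n n" and UU: "adj U * U = 1\<^sub>m n"
    using U by (simp_all add: unitary_mat_def)
  have D: "D \<in> carrier_mat n n" and B: "B \<in> carrier_mat n n" and \<rho>c: "\<rho> \<in> carrier_mat n n"
    using A Uc by (simp_all add: D_def B_def \<rho>)
  have "adj U * \<rho> = (adj U * U) * (D * adj U)"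
    using Uc by (simp add: \<rho> D_def assoc_mult_mat_dims)
  then have left: "adj U * \<rho> = D * adj U"
    using Uc D by (simp add: UU)
  have "\<rho> * U = U * D * (adj U * U)"
    using Uc by (simp add: \<rho> D_def assoc_mult_mat_dims)
  then have right: "\<rho> * U = U * D"
    using Uc D by (simp add: UU)
  have "adj U * comm \<rho> A * U = (adj U * \<rho>) * A * U - adj U * A * (\<rho> * U)"
    using Uc A \<rho>c
    by (simp add: comm_def mult_minus_distrib_mat[where nr = n and n = n and nc = n]
        minus_mult_distrib_mat[where nr = n and n = n and nc = n] assoc_mult_mat_dims)
  also have "\<dots> = D * B - B * D"
    using Uc A D by (simp add: left right B_def assoc_mult_mat_dims)
  finally have comm: "adj U * comm \<rho> A * U = D * B - B * D" .
  have "comm \<rho> A \<in> carrier_mat n n"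
    using \<rho>c A by (simp add: comm_def minus_carrier_mat)
  then have "adj U * (c \<cdot>\<^sub>m comm \<rho> A) * U = c \<cdot>\<^sub>m (adj U * comm \<rho> A * U)"
    using Uc by (simp add: mult_smult_distrib[where nr = n and n = n and nc = n]
        mult_smult_assoc_mat[where nr = n and n = n and nc = n])
  then have "adj U * (c \<cdot>\<^sub>m comm \<rho> A) * U = c \<cdot>\<^sub>m (D * B - B * D)"
    unfolding comm .
  then have "(adj U * (c \<cdot>\<^sub>m comm \<rho> A) * U) $$ (i,j) =
      c * ((D * B) $$ (i,j) - (B * D) $$ (i,j))"
    using B D ij by simp
  also have "\<dots> = c * (complex_of_real (l i) * B $$ (i,j) - B $$ (i,j) * complex_of_real (l j))"
    using B ij by (simp only: D_def diag_c_mult_index)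
  finally show ?thesis
    by (simp add: B_def algebra_simps)
qed

lemma mtrace_adj_mult_entrywise_div:
  assumes "Y \<in> carrier_mat n n"
  shows "mtrace (adj Y * mat n n (\<lambda>(i,j). Y $$ (i,j) / w i j)) =
           (\<Sum>i<n. \<Sum>j<n. complex_of_real ((cmod (Y $$ (j,i)))\<^sup>2) / w j i)"
proof -
  have norm_sq: "cnj z * z = (complex_of_real (cmod z))\<^sup>2" for z :: complex
    by (metis complex_norm_square mult.commute of_real_power)
  show ?thesis
    using assms by (simp add: mtrace_def scalar_prod_def atLeast0LessThan norm_sq)
qed

lemma mtrace_adj_mult_self_in_basis:
  assumes U: "unitary_mat n U" and X: "X \<in> carrier_mat n n"
  defines "Y \<equiv> adj U * X * U"
  shows "mtrace (adj X * X) = (\<Sum>i<n. \<Sum>j<n. complex_of_real ((cmod (Y $$ (j,i)))\<^sup>2))"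
proof -
  have Uc: "U \<in> carrier_mat n n" and UU': "U * adj U = 1\<^sub>m n"
    using U unitary_mat_right_inverse[OF U] by (simp_all add: unitary_mat_def)
  have Y: "Y \<in> carrier_mat n n" using Uc X by (simp add: Y_def)
  have "adj Y * Y = adj U * adj X * (U * adj U) * X * U"
    using Uc X by (simp add: Y_def adj_mult[where n = n and m = n and k = n] assoc_mult_mat_dims)
  also have "\<dots> = adj U * (adj X * X) * U"
    using Uc X by (simp add: UU' assoc_mult_mat_dims)
  finally have "mtrace (adj X * X) = mtrace (adj Y * Y)"
    using U X by (simp add: mtrace_unitary_conj)
  moreover have "mat n n (\<lambda>(i,j). Y $$ (i,j) / 1) = Y"
    using Y by (intro eq_matI) auto
  ultimately show ?thesis
    using mtrace_adj_mult_entrywise_div[OF Y, of "\<lambda>_ _. 1"] by simp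
qed

lemma mtrace_adj_mult_mf_inv_in_basis:
  assumes U: "unitary_mat n U" and X: "X \<in> carrier_mat n n"
  defines "Y \<equiv> adj U * X * U"
  shows "mtrace (adj X * mf_inv_in_basis f n U l X) =
           (\<Sum>i<n. \<Sum>j<n. complex_of_real ((cmod (Y $$ (j,i)))\<^sup>2 / mean_of f (l j) (l i)))"
proof -
  define M where "M = mat n n (\<lambda>(i,j). Y $$ (i,j) / complex_of_real (mean_of f (l i) (l j)))"
  have Uc: "U \<in> carrier_mat n n" using U by (simp add: unitary_mat_def)
  have Y: "Y \<in> carrier_mat n n" and M: "M \<in> carrier_mat n n"
    using Uc X by (simp_all add: Y_def M_def)
  have adjY: "adj Y = adj U * adj X * U"
    using Uc X by (simp add: Y_def adj_mult[where n = n and m = n and k = n] assoc_mult_mat_dims)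
  have "mtrace (adj X * mf_inv_in_basis f n U l X) = mtrace ((adj X * U * M) * adj U)"
    using Uc X M by (simp add: mf_inv_in_basis_def M_def Y_def assoc_mult_mat_dims)
  also have "\<dots> = mtrace (adj U * (adj X * U * M))"
    using Uc X M by (simp add: mtrace_mult_comm[of "adj X * U * M" n n "adj U"])
  also have "\<dots> = mtrace (adj Y * M)"
    using Uc X M by (simp add: adjY assoc_mult_mat_dims)
  finally show ?thesis
    using Y by (simp add: M_def mtrace_adj_mult_entrywise_div)
qed

lemma fnorm2_in_some_eigenbasis:
  assumes \<rho>: "\<rho> \<in> carrier_mat n n" and V: "unitary_mat n V" "\<rho> = V * diag_c n l * adj V"
  obtains U lam where "unitary_mat n U" "\<rho> = U * diag_c n lam * adj U"
    "fnorm2 f \<rho> X = mtrace (adj X * mf_inv_in_basis f n U lam X)"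
proof -
  define P where "P = (\<lambda>(U, lam). unitary_mat n U \<and> \<rho> = U * diag_c n lam * adj U)"
  have "P (V, l)" using V by (simp add: P_def)
  then have "P (SOME p. P p)" by (rule someI)
  moreover obtain U lam where U_lam: "(SOME p. P p) = (U, lam)" by (cases "SOME p. P p")
  ultimately have "unitary_mat n U" "\<rho> = U * diag_c n lam * adj U"
    by (simp_all add: P_def)
  moreover have "fnorm2 f \<rho> X = mtrace (adj X * mf_inv_in_basis f n U lam X)"
    using \<rho> U_lam by (simp add: fnorm2_def P_def)
  ultimately show ?thesis
    by (rule that)
qed

lemma adj_mat_of_cols_mult_index:
  assumes vs: "set vs \<subseteq> carrier_vec n" and M: "M \<in> carrier_mat n n"
    and ij: "i < length vs" "j < length vs"
  shows "(adj (mat_of_cols n vs) * M * mat_of_cols n vs) $$ (i,j) = (M *\<^sub>v vs ! j) \<bullet>c vs ! i"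
proof -
  define V where "V = mat_of_cols n vs"
  have V: "V \<in> carrier_mat n (length vs)" by (simp add: V_def)
  have vi: "vs ! i \<in> carrier_vec n" and vj: "vs ! j \<in> carrier_vec n" using vs ij by auto
  have "adj V * M * V = adj V * (M * V)"
    using V M by (simp add: assoc_mult_mat_dims)
  then have "(adj V * M * V) $$ (i,j) = row (adj V) i \<bullet> col (M * V) j"
    using V M ij by simp
  also have "row (adj V) i = conjugate (vs ! i)"
    using V vi ij by (intro eq_vecI) (auto simp: V_def mat_of_cols_index)
  also have "col (M * V) j = M *\<^sub>v vs ! j"
    using col_mult2[OF M V ij(2)] ij vj by (simp add: V_def)
  finally show ?thesis
    using M vi vj by (simp add: V_def conjugate_vec_sprod_comm[of "M *\<^sub>v vs ! j" n])
qed

lemma unitary_mat_of_cols: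
  assumes vs: "set vs \<subseteq> carrier_vec n" "length vs = n"
    and orth: "\<And>i j. i < n \<Longrightarrow> j < n \<Longrightarrow> vs ! j \<bullet>c vs ! i = (if i = j then 1 else 0)"
  shows "unitary_mat n (mat_of_cols n vs)"
proof -
  have vs_carrier: "vs ! j \<in> carrier_vec n" if "j < n" for j
    using vs that by auto
  have "adj (mat_of_cols n vs) * mat_of_cols n vs = 1\<^sub>m n"
  proof (rule eq_matI)
    fix i j assume "i < dim_row (1\<^sub>m n :: complex mat)" "j < dim_col (1\<^sub>m n :: complex mat)"
    then show "(adj (mat_of_cols n vs) * mat_of_cols n vs) $$ (i,j) = 1\<^sub>m n $$ (i,j)"
      using adj_mat_of_cols_mult_index[OF vs(1) one_carrier_mat, of i j] vs orth[of i j]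
        vs_carrier[of j]
      by auto
  qed (use vs in auto)
  then show ?thesis
    using vs mat_of_cols_carrier[of n vs] by (simp add: unitary_mat_def)
qed

lemma diagonalization_of_eigenbasis:
  assumes V: "unitary_mat n (mat_of_cols n vs)" and vs: "set vs \<subseteq> carrier_vec n" "length vs = n"
    and \<rho>: "\<rho> \<in> carrier_mat n n"
    and eig: "\<And>j. j < n \<Longrightarrow> \<rho> *\<^sub>v vs ! j = complex_of_real (l j) \<cdot>\<^sub>v vs ! j"
  shows "\<rho> = mat_of_cols n vs * diag_c n l * adj (mat_of_cols n vs)"
proof -
  define W where "W = mat_of_cols n vs"
  have W: "W \<in> carrier_mat n n" using vs mat_of_cols_carrier[of n vs] by (simp add: W_def)
  have vs_carrier: "vs ! j \<in> carrier_vec n" if "j < n" for j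
    using vs that by auto
  have "\<rho> * W = W * diag_c n l"
  proof (rule eq_matI)
    fix i j assume "i < dim_row (W * diag_c n l)" "j < dim_col (W * diag_c n l)"
    then have i: "i < n" and j: "j < n" using W by auto
    have "(\<rho> * W) $$ (i,j) = (\<rho> *\<^sub>v vs ! j) $ i"
      using W \<rho> vs vs_carrier[OF j] i j by (simp add: W_def)
    also have "\<dots> = vs ! j $ i * complex_of_real (l j)"
      using eig[OF j] vs_carrier[OF j] i by (simp add: mult.commute)
    also have "\<dots> = (W * diag_c n l) $$ (i,j)"
      using diag_c_mult_index(2)[OF W i j] vs i j by (simp add: W_def mat_of_cols_index)
    finally show "(\<rho> * W) $$ (i,j) = (W * diag_c n l) $$ (i,j)" .
  qed (use W \<rho> in auto)
  then have "\<rho> * (W * adj W) = W * diag_c n l * adj W"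
    using W \<rho> assoc_mult_mat_dims[of \<rho> W "adj W"] by simp
  then show ?thesis
    using V \<rho> by (simp add: W_def unitary_mat_right_inverse)
qed

lemma adj_unitary_conj_hermitian:
  assumes "hermitian_mat A" "A \<in> carrier_mat n n" "U \<in> carrier_mat n n"
  shows "adj (adj U * A * U) = adj U * A * U"
proof -
  have "adj (adj U * A * U) = adj U * (adj A * adj (adj U))"
    using assms(2,3) by (simp add: adj_mult[of "adj U * A" n n U n] adj_mult[of "adj U" n n A n])
  then show ?thesis
    using assms by (simp add: hermitian_mat_def assoc_mult_mat_dims)
qed

lemma shifted_mult_mat_vec_sprod:
  fixes A :: "complex mat"
  assumes "A \<in> carrier_mat n n" "v \<in> carrier_vec n" "w \<in> carrier_vec n"
  shows "((A - c \<cdot>\<^sub>m 1\<^sub>m n) *\<^sub>v v) \<bullet>c w = (A *\<^sub>v v) \<bullet>c w - c * (v \<bullet>c w)"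
proof -
  have "c \<cdot>\<^sub>v v = c \<cdot>\<^sub>v (1\<^sub>m n *\<^sub>v v)"
    using assms by simp
  also have "\<dots> = (c \<cdot>\<^sub>m 1\<^sub>m n) *\<^sub>v v"
    using assms by auto
  finally have "(c \<cdot>\<^sub>m 1\<^sub>m n) *\<^sub>v v = c \<cdot>\<^sub>v v" ..
  then show ?thesis
    using assms by (simp add: minus_mult_distrib_mat_vec[of A n n] minus_scalar_prod_distrib[of _ n])
qed

lemma mean_of_commute:
  assumes f: "\<forall>t>0. t * f (1 / t) = f t" and "a > 0" "b > 0"
  shows "mean_of f b a = mean_of f a b"
proof -
  have "a / b * f (b / a) = f (a / b)"
    using f assms(2,3) by (metis divide_pos_pos inverse_divide inverse_eq_divide)
  then show ?thesis
    using assms(2,3) by (auto simp: mean_of_def field_simps)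
qed

lemma mean_of_scale:
  assumes "c \<noteq> 0"
  shows "mean_of f (c * a) (c * b) = c * mean_of f a b"
  using assms by (simp add: mean_of_def)

lemma mean_of_ftilde:
  assumes "a \<noteq> 0"
  shows "mean_of (ftilde f) a b = ((a + b) - (b - a)\<^sup>2 * fzero f / mean_of f a b) / 2"
proof (cases "f (b / a) = 0")
  case True
  then show ?thesis using assms by (simp add: mean_of_def ftilde_def field_simps)
next
  case False
  then show ?thesis using assms by (simp add: mean_of_def ftilde_def field_simps power2_eq_square)
qed

lemma one_minus_mean_ftilde:
  assumes "r \<noteq> 1"
  shows "1 - mean_of (ftilde f) (1 - r) (1 + r) =
           fzero f * r\<^sup>2 / mean_of f ((1 - r) / 2) ((1 + r) / 2)"
proof -
  define m where "m = mean_of f ((1 - r) / 2) ((1 + r) / 2)"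
  have halves: "2 * ((1 - r) / 2) = 1 - r" "2 * ((1 + r) / 2) = 1 + r"
    by simp_all
  have "mean_of f (1 - r) (1 + r) = 2 * m"
    using mean_of_scale[of 2 f "(1 - r) / 2" "(1 + r) / 2", unfolded halves] by (simp add: m_def)
  then have "mean_of (ftilde f) (1 - r) (1 + r) = (2 - (2 * r)\<^sup>2 * fzero f / (2 * m)) / 2"
    using assms by (simp add: mean_of_ftilde)
  then show ?thesis
    by (cases "m = 0") (simp_all add: m_def[symmetric] field_simps power2_eq_square)
qed

lemma sum_lessThan_2: "(\<Sum>i<2. g i) = g 0 + g (1::nat)"
  by (simp add: eval_nat_numeral)

lemma sum_and_sum_squares_eq:
  fixes a b c d :: real
  assumes "a + b = c + d" "a\<^sup>2 + b\<^sup>2 = c\<^sup>2 + d\<^sup>2"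
  shows "a = c \<and> b = d \<or> a = d \<and> b = c"
proof -
  have b: "b = c + d - a" using assms(1) by simp
  have "2 * ((a - c) * (a - d)) = a\<^sup>2 + (c + d - a)\<^sup>2 - c\<^sup>2 - d\<^sup>2"
    by (simp add: power2_eq_square algebra_simps)
  then have "(a - c) * (a - d) = 0"
    using assms(2) b by simp
  then show ?thesis using b by auto
qed

lemma unitary_diag_eigenvalues_2:
  assumes U: "unitary_mat 2 U" and V: "unitary_mat 2 V"
    and eq: "U * diag_c 2 lam * adj U = V * diag_c 2 l * adj V"
  shows "lam 0 = l 0 \<and> lam 1 = l 1 \<or> lam 0 = l 1 \<and> lam 1 = l 0"
proof (rule sum_and_sum_squares_eq)
  show "lam 0 + lam 1 = l 0 + l 1"
    using arg_cong[OF eq, of mtrace] U V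
    by (simp add: mtrace_unitary_diag sum_lessThan_2 flip: of_real_add)
  show "(lam 0)\<^sup>2 + (lam 1)\<^sup>2 = (l 0)\<^sup>2 + (l 1)\<^sup>2"
    using arg_cong[OF eq, of "\<lambda>M. mtrace (M * M)"] U V
    by (simp add: unitary_diag_square mtrace_unitary_diag sum_lessThan_2
        flip: of_real_add of_real_power)
qed

lemma mtrace_adj_mult_mf_inv_commutator_2:
  assumes U: "unitary_mat 2 U" and \<rho>: "\<rho> = U * diag_c 2 l * adj U" and A: "A \<in> carrier_mat 2 2"
    and sym: "mean_of f (l 1) (l 0) = mean_of f (l 0) (l 1)"
  defines "X \<equiv> \<i> \<cdot>\<^sub>m comm \<rho> A"
  shows "mtrace (adj X * mf_inv_in_basis f 2 U l X) =
           mtrace (adj X * X) / complex_of_real (mean_of f (l 0) (l 1))"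
proof -
  have Uc: "U \<in> carrier_mat 2 2" using U by (simp add: unitary_mat_def)
  have X: "X \<in> carrier_mat 2 2" using \<rho> Uc A by (simp add: X_def comm_def minus_carrier_mat)
  have "(adj U * X * U) $$ (0,0) = 0" "(adj U * X * U) $$ (1,1) = 0"
    using commutator_in_eigenbasis[OF U \<rho> A, of 0 0] commutator_in_eigenbasis[OF U \<rho> A, of 1 1]
    by (simp_all add: X_def)
  then show ?thesis
    using sym
    by (simp add: mtrace_adj_mult_mf_inv_in_basis[OF U X] mtrace_adj_mult_self_in_basis[OF U X]
        sum_lessThan_2 add_divide_distrib)
qed

lemma mtrace_adj_mult_self_commutator_2:
  assumes U: "unitary_mat 2 U" and \<rho>: "\<rho> = U * diag_c 2 l * adj U"
    and A: "A \<in> carrier_mat 2 2" "hermitian_mat A"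
  defines "X \<equiv> \<i> \<cdot>\<^sub>m comm \<rho> A" and "B \<equiv> adj U * A * U"
  shows "mtrace (adj X * X) = complex_of_real (2 * (l 0 - l 1)\<^sup>2 * (cmod (B $$ (1,0)))\<^sup>2)"
proof -
  define Y where "Y = adj U * X * U"
  have Uc: "U \<in> carrier_mat 2 2" using U by (simp add: unitary_mat_def)
  have X: "X \<in> carrier_mat 2 2" using \<rho> Uc A by (simp add: X_def comm_def minus_carrier_mat)
  have B: "B \<in> carrier_mat 2 2" using Uc A by (simp add: B_def)
  have Y_sq: "(cmod (Y $$ (i,j)))\<^sup>2 = (l i - l j)\<^sup>2 * (cmod (B $$ (i,j)))\<^sup>2"
    if "i < 2" "j < 2" for i j
    using commutator_in_eigenbasis[OF U \<rho> A(1) that, of \<i>]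
    by (simp add: X_def Y_def B_def norm_mult power_mult_distrib del: of_real_diff)
  have "B $$ (0,1) = adj B $$ (0,1)"
    using adj_unitary_conj_hermitian[OF A(2,1) Uc] by (simp add: B_def)
  then have "cmod (B $$ (0,1)) = cmod (B $$ (1,0))"
    using B by simp
  moreover have "(l 1 - l 0)\<^sup>2 = (l 0 - l 1)\<^sup>2"
    by (rule power2_commute)
  ultimately have HS: "(\<Sum>i<2. \<Sum>j<2. (cmod (Y $$ (j,i)))\<^sup>2) =
      2 * (l 0 - l 1)\<^sup>2 * (cmod (B $$ (1,0)))\<^sup>2"
    using Y_sq[of 0 0] Y_sq[of 0 1] Y_sq[of 1 0] Y_sq[of 1 1] by (simp add: sum_lessThan_2)
  have "mtrace (adj X * X) = complex_of_real (\<Sum>i<2. \<Sum>j<2. (cmod (Y $$ (j,i)))\<^sup>2)"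
    using mtrace_adj_mult_self_in_basis[OF U X] by (simp add: Y_def)
  also have "\<dots> = complex_of_real (2 * (l 0 - l 1)\<^sup>2 * (cmod (B $$ (1,0)))\<^sup>2)"
    by (simp only: HS)
  finally show ?thesis .
qed

lemma fnorm2_commutator_2:
  assumes \<rho>: "\<rho> \<in> carrier_mat 2 2" and V: "unitary_mat 2 V" "\<rho> = V * diag_c 2 l * adj V"
    and A: "A \<in> carrier_mat 2 2" and l: "l 0 > 0" "l 1 > 0"
    and f: "\<forall>t>0. t * f (1 / t) = f t"
  defines "X \<equiv> \<i> \<cdot>\<^sub>m comm \<rho> A"
  shows "fnorm2 f \<rho> X = mtrace (adj X * X) / complex_of_real (mean_of f (l 0) (l 1))"
proof -
  obtain U lam where U: "unitary_mat 2 U" "\<rho> = U * diag_c 2 lam * adj U"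
    and fnorm2_eq: "fnorm2 f \<rho> X = mtrace (adj X * mf_inv_in_basis f 2 U lam X)"
    using fnorm2_in_some_eigenbasis[OF \<rho> V] .
  (* the basis chosen in fnorm2 may list the eigenvalues in the other order *)
  have "lam 0 = l 0 \<and> lam 1 = l 1 \<or> lam 0 = l 1 \<and> lam 1 = l 0"
    using unitary_diag_eigenvalues_2[OF U(1) V(1)] U(2) V(2) by simp
  then have "mean_of f (lam 0) (lam 1) = mean_of f (l 0) (l 1)"
    and "mean_of f (lam 1) (lam 0) = mean_of f (lam 0) (lam 1)"
    using mean_of_commute[OF f l] by auto
  then show ?thesis
    using mtrace_adj_mult_mf_inv_commutator_2[OF U A, of f] fnorm2_eq by (simp add: X_def)
qed

lemma bloch_state_carrier: "bloch_state x y z \<in> carrier_mat 2 2"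
  by (simp add: bloch_state_def sigma1_def sigma2_def sigma3_def mat_of_rows_list_def
      numeral_2_eq_2)

lemma unitary_mat_of_orthonormal_pair:
  assumes vw: "v \<in> carrier_vec 2" "w \<in> carrier_vec 2"
    and "v \<bullet>c v = 1" "w \<bullet>c w = 1" "v \<bullet>c w = 0"
  shows "unitary_mat 2 (mat_of_cols 2 [v, w])"
proof -
  have "w \<bullet>c v = conjugate (v \<bullet>c w)"
    using vw by (simp only: conjugate_conjugate_sprod[of w 2 v, symmetric]
        conjugate_vec_sprod_comm[of v 2 w])
  then show ?thesis
    using assms by (intro unitary_mat_of_cols) (auto simp: less_2_cases_iff)
qed

theorem mainTheorem8:
  fixes x y z :: real and A :: "complex mat" and f :: "real \<Rightarrow> real"
    and phi1 phi2 :: "complex vec"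
  defines "\<rho> \<equiv> bloch_state x y z"
    and "r \<equiv> sqrt (x^2 + y^2 + z^2)"
  defines "A0 \<equiv> A - mtrace (\<rho> * A) \<cdot>\<^sub>m 1\<^sub>m 2"
  defines "a12 \<equiv> (A0 *\<^sub>v phi1) \<bullet>c phi2"
  assumes r_lt: "r < 1"
    and A_carrier: "A \<in> carrier_mat 2 2" and A_herm: "hermitian_mat A"
    and f_class: "F_op_r f"
    and phi_carrier: "phi1 \<in> carrier_vec 2" "phi2 \<in> carrier_vec 2"
    and phi_orthonormal: "phi1 \<bullet>c phi1 = 1" "phi2 \<bullet>c phi2 = 1" "phi1 \<bullet>c phi2 = 0"
    and phi1_eig: "\<rho> *\<^sub>v phi1 = complex_of_real ((1 - r) / 2) \<cdot>\<^sub>v phi1"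
    and phi2_eig: "\<rho> *\<^sub>v phi2 = complex_of_real ((1 + r) / 2) \<cdot>\<^sub>v phi2"
  shows "finfo f \<rho> A =
           complex_of_real ((1 - mean_of (ftilde f) (1 - r) (1 + r)) * (cmod a12)^2)"
proof -
  define l where "l = (\<lambda>j::nat. if j = 0 then (1 - r) / 2 else (1 + r) / 2)"
  define V where "V = mat_of_cols 2 [phi1, phi2]"
  have \<rho>: "\<rho> \<in> carrier_mat 2 2"
    by (simp add: \<rho>_def bloch_state_carrier)
  have phi: "set [phi1, phi2] \<subseteq> carrier_vec 2" "length [phi1, phi2] = 2"
    using phi_carrier by auto
  have V: "unitary_mat 2 V"
    unfolding V_def by (rule unitary_mat_of_orthonormal_pair[OF phi_carrier phi_orthonormal])
  have \<rho>V: "\<rho> = V * diag_c 2 l * adj V"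
    unfolding V_def using phi1_eig phi2_eig
    by (intro diagonalization_of_eigenbasis[OF V[unfolded V_def] phi \<rho>])
      (auto simp: less_2_cases_iff l_def)
  have a12: "(adj V * A * V) $$ (1,0) = a12"
    using adj_mat_of_cols_mult_index[OF phi(1) A_carrier, of 1 0]
      shifted_mult_mat_vec_sprod[OF A_carrier phi_carrier]
    by (simp add: V_def a12_def A0_def phi_orthonormal)
  have "0 \<le> r"
    by (simp add: r_def)
  then have l: "l 0 > 0" "l 1 > 0" "l 0 - l 1 = - r"
    using r_lt by (simp_all add: l_def field_simps)
  have f: "\<forall>t>0. t * f (1 / t) = f t"
    using f_class by (simp add: F_op_r_def F_op_def)
  have fnorm2_eq: "fnorm2 f \<rho> (\<i> \<cdot>\<^sub>m comm \<rho> A) =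
      complex_of_real (2 * r\<^sup>2 * (cmod a12)\<^sup>2 / mean_of f (l 0) (l 1))"
    using fnorm2_commutator_2[OF \<rho> V \<rho>V A_carrier l(1,2) f]
      mtrace_adj_mult_self_commutator_2[OF V \<rho>V A_carrier A_herm, unfolded a12 l(3)]
    by simp
  have one_minus:
    "1 - mean_of (ftilde f) (1 - r) (1 + r) = fzero f * r\<^sup>2 / mean_of f (l 0) (l 1)"
    using one_minus_mean_ftilde[of r f] r_lt by (simp add: l_def)
  have "fzero f / 2 * (2 * r\<^sup>2 * (cmod a12)\<^sup>2 / mean_of f (l 0) (l 1)) =
      (1 - mean_of (ftilde f) (1 - r) (1 + r)) * (cmod a12)\<^sup>2"
    unfolding one_minus by (cases "mean_of f (l 0) (l 1) = 0") (simp_all add: field_simps)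
  then show ?thesis
    by (simp only: finfo_def fnorm2_eq of_real_mult[symmetric])
qed

end
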